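(* In the I-phase model, for every formula $A$: (1) for every formula $D$, every $n\ge 0$ and $T_1,\dots,T_n$ each a closed term or an atom, if $c^D T_1\cdots T_n\in[\![A]\!]$ then $c^D T_1\cdots T_n\in A^\dagger$; and (2) $A^\dagger\subseteq[\![A]\!]$.
   Context: System $\mathbf{IL}_{\mathbf{at}}$: formulas $A ::= X\mid A\to B\mid\forall X.A$ ($X$ atoms); terms $t ::= x\mid c^A\mid\lambda x.t\mid ts\mid\Lambda X.t\mid tX$ (a term-constant $c^A$ for each formula; $tX$ only with $X$ an atom). $\Gamma\vdash t:A$ derivable by: $\Gamma,x:A\vdash x:A$; $\Gamma\vdash c^A:A$; $\to$-introduction/elimination (abstraction/application); $\forall$-introduction ($\Gamma\vdash\Lambda X.t:\forall X.A$ from $\Gamma\vdash t:A$, $X$ not free in formulas of $\Gamma$); $\forall$-elimination ($\Gamma\vdash tY:A[X:=Y]$ from $\Gamma\vdash t:\forall X.A$, $Y$ an atom). $\beta$-reduction $(\lambda x.t)s\to_\beta t[x:=s]$, $(\Lambda X.t)Y\to_\beta t[X:=Y]$ in any subterm position; normal = no redex; $\twoheadrightarrow$ reflexive-transitive closure of $\to_\beta$. $\eta$-expansion: $t\to_{\eta^{-1}}\lambda x.(tx)$ ($x\notin FV(t)$), $t\to_{\eta^{-1}}\Lambda X.(tX)$ ($X\notin FV(t)$). Closed term = no free term-variables. $[\![A]\!]$ = closed terms $t$ with $t\twoheadrightarrow s$ for some normal $s$ such that $\vdash s:A$ is derivable. I-phase model: interpretation of formulas as sets of closed terms: $X^\dagger=[\![X]\!]$;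 $(B\to C)^\dagger$ = closed $t$ such that $t\twoheadrightarrow u\to_{\eta^{-1}}\lambda x.(ux)$ for some $u$ with $x\notin FV(u)$ and $ux[x:=s]\in C^\dagger$ for all $s\in B^\dagger$; $(\forall X.A)^\dagger$ = closed $t$ such that $t\twoheadrightarrow u\to_{\eta^{-1}}\Lambda X.(uX)$ for some $u$ with $X\notin FV(u)$ and $uX[X:=Y]\in(A[X:=Y])^\dagger$ for all atoms $Y$. *)

theory Defs
  imports Main
begin

text \<open>Atoms are natural numbers used as de Bruijn indices: an atom index not bound
by an enclosing quantifier (in formulas) or type abstraction (in terms) denotes a
free atom. Term variables are de Bruijn indices as well.\<close>

datatype fm = Atom nat | Imp fm fm | All fm

fun fsize :: "fm \<Rightarrow> nat" where
  "fsize (Atom n) = 1"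
| "fsize (Imp A B) = Suc (fsize A + fsize B)"
| "fsize (All A) = Suc (fsize A)"

fun fshift :: "nat \<Rightarrow> fm \<Rightarrow> fm" where
  "fshift k (Atom n) = Atom (if n < k then n else Suc n)"
| "fshift k (Imp A B) = Imp (fshift k A) (fshift k B)"
| "fshift k (All A) = All (fshift (Suc k) A)"

text \<open>\<open>fsubst k Y A\<close>: replace atom index k by the (outer) atom Y; \<open>A[X:=Y]\<close> for
\<open>\<forall>X. A\<close> is \<open>fsubst 0 Y A\<close>.\<close>
fun fsubst :: "nat \<Rightarrow> nat \<Rightarrow> fm \<Rightarrow> fm" where
  "fsubst k Y (Atom n) = Atom (if n < k then n else if n = k then Y + k else n - 1)"
| "fsubst k Y (Imp A B) = Imp (fsubst k Y A) (fsubst k Y B)"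
| "fsubst k Y (All A) = All (fsubst (Suc k) Y A)"

lemma fsize_fsubst[simp]: "fsize (fsubst k Y A) = fsize A"
  by (induction A arbitrary: k) auto

datatype tm = Var nat | Con fm | Lam tm | App tm tm | TLam tm | TApp tm nat

fun lift :: "nat \<Rightarrow> tm \<Rightarrow> tm" where
  "lift k (Var i) = Var (if i < k then i else Suc i)"
| "lift k (Con A) = Con A"
| "lift k (Lam t) = Lam (lift (Suc k) t)"
| "lift k (App t s) = App (lift k t) (lift k s)"
| "lift k (TLam t) = TLam (lift k t)"
| "lift k (TApp t Y) = TApp (lift k t) Y"

fun ashift :: "nat \<Rightarrow> tm \<Rightarrow> tm" where
  "ashift k (Var i) = Var i"
| "ashift k (Con A) = Con (fshift k A)"
| "ashift k (Lam t) = Lam (ashift k t)"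
| "ashift k (App t s) = App (ashift k t) (ashift k s)"
| "ashift k (TLam t) = TLam (ashift (Suc k) t)"
| "ashift k (TApp t n) = TApp (ashift k t) (if n < k then n else Suc n)"

fun subst :: "nat \<Rightarrow> tm \<Rightarrow> tm \<Rightarrow> tm" where
  "subst k s (Var i) = (if i < k then Var i else if i = k then s else Var (i - 1))"
| "subst k s (Con A) = Con A"
| "subst k s (Lam t) = Lam (subst (Suc k) (lift 0 s) t)"
| "subst k s (App t r) = App (subst k s t) (subst k s r)"
| "subst k s (TLam t) = TLam (subst k (ashift 0 s) t)"
| "subst k s (TApp t Y) = TApp (subst k s t) Y"

fun asubst :: "nat \<Rightarrow> nat \<Rightarrow> tm \<Rightarrow> tm" where
  "asubst k Y (Var i) = Var i"
| "asubst k Y (Con A) = Con (fsubst k Y A)"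
| "asubst k Y (Lam t) = Lam (asubst k Y t)"
| "asubst k Y (App t s) = App (asubst k Y t) (asubst k Y s)"
| "asubst k Y (TLam t) = TLam (asubst (Suc k) Y t)"
| "asubst k Y (TApp t n) =
     TApp (asubst k Y t) (if n < k then n else if n = k then Y + k else n - 1)"

text \<open>In the \<forall>-introduction rule the context is shifted, so the bound atom
(index 0) does not occur free in it.\<close>
inductive typing :: "fm list \<Rightarrow> tm \<Rightarrow> fm \<Rightarrow> bool" where
  T_Var: "i < length \<Gamma> \<Longrightarrow> typing \<Gamma> (Var i) (\<Gamma> ! i)"
| T_Con: "typing \<Gamma> (Con A) A"
| T_Lam: "typing (B # \<Gamma>) t C \<Longrightarrow> typing \<Gamma> (Lam t) (Imp B C)"
| T_App: "typing \<Gamma> t (Imp B C) \<Longrightarrow> typing \<Gamma> s B \<Longrightarrow> typing \<Gamma> (App t s) C"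
| T_TLam: "typing (map (fshift 0) \<Gamma>) t A \<Longrightarrow> typing \<Gamma> (TLam t) (All A)"
| T_TApp: "typing \<Gamma> t (All A) \<Longrightarrow> typing \<Gamma> (TApp t Y) (fsubst 0 Y A)"

inductive beta :: "tm \<Rightarrow> tm \<Rightarrow> bool" where
  B_beta: "beta (App (Lam t) s) (subst 0 s t)"
| B_tbeta: "beta (TApp (TLam t) Y) (asubst 0 Y t)"
| B_Lam: "beta t t' \<Longrightarrow> beta (Lam t) (Lam t')"
| B_AppL: "beta t t' \<Longrightarrow> beta (App t s) (App t' s)"
| B_AppR: "beta s s' \<Longrightarrow> beta (App t s) (App t s')"
| B_TLam: "beta t t' \<Longrightarrow> beta (TLam t) (TLam t')"
| B_TApp: "beta t t' \<Longrightarrow> beta (TApp t Y) (TApp t' Y)"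

abbreviation beta_star :: "tm \<Rightarrow> tm \<Rightarrow> bool" where
  "beta_star \<equiv> beta\<^sup>*\<^sup>*"

fun is_lam :: "tm \<Rightarrow> bool" where
  "is_lam (Lam _) = True" | "is_lam _ = False"

fun is_tlam :: "tm \<Rightarrow> bool" where
  "is_tlam (TLam _) = True" | "is_tlam _ = False"

fun normal :: "tm \<Rightarrow> bool" where
  "normal (Var i) = True"
| "normal (Con A) = True"
| "normal (Lam t) = normal t"
| "normal (App t s) = (\<not> is_lam t \<and> normal t \<and> normal s)"
| "normal (TLam t) = normal t"
| "normal (TApp t Y) = (\<not> is_tlam t \<and> normal t)"

fun closed_at :: "nat \<Rightarrow> tm \<Rightarrow> bool" where
  "closed_at k (Var i) = (i < k)"
| "closed_at k (Con A) = True"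
| "closed_at k (Lam t) = closed_at (Suc k) t"
| "closed_at k (App t s) = (closed_at k t \<and> closed_at k s)"
| "closed_at k (TLam t) = closed_at k t"
| "closed_at k (TApp t Y) = closed_at k t"

definition closed :: "tm \<Rightarrow> bool" where
  "closed t \<longleftrightarrow> closed_at 0 t"

definition den :: "fm \<Rightarrow> tm set" where
  "den A = {t. closed t \<and> (\<exists>s. beta_star t s \<and> normal s \<and> typing [] s A)}"

text \<open>The eta-expansion step \<open>u \<rightarrow> \<lambda>x.(u x)\<close>
(resp. \<open>\<Lambda>X.(u X)\<close>) with x (X) fresh is always available; its body \<open>u x\<close> is
\<open>App (lift 0 u) (Var 0)\<close> (resp. \<open>TApp (ashift 0 u) 0\<close>) in de Bruijn form.\<close>
function dag :: "fm \<Rightarrow> tm set" where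
  "dag (Atom X) = den (Atom X)"
| "dag (Imp B C) = {t. closed t \<and> (\<exists>u. beta_star t u \<and>
      (\<forall>s \<in> dag B. subst 0 s (App (lift 0 u) (Var 0)) \<in> dag C))}"
| "dag (All A) = {t. closed t \<and> (\<exists>u. beta_star t u \<and>
      (\<forall>Y. asubst 0 Y (TApp (ashift 0 u) 0) \<in> dag (fsubst 0 Y A)))}"
  by pat_completeness auto
termination
  by (relation "measure fsize") auto

text \<open>Spines \<open>c^D T_1 \<dots> T_n\<close>: each argument is a term (Inl) or an atom (Inr).\<close>
fun apps :: "tm \<Rightarrow> (tm + nat) list \<Rightarrow> tm" where
  "apps t [] = t"
| "apps t (Inl s # Ts) = apps (App t s) Ts"
| "apps t (Inr Y # Ts) = apps (TApp t Y) Ts"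

fun arg_ok :: "tm + nat \<Rightarrow> bool" where
  "arg_ok (Inl s) = closed s"
| "arg_ok (Inr Y) = True"

end

theory Submission
  imports Defs
begin

text \<open>Both parts are proved together by induction on the size of \<open>A\<close>; the instances
\<open>A[X:=Y]\<close> have the size of \<open>A\<close>. For (1) at \<open>B \<rightarrow> C\<close>, the spine \<open>c\<^sup>D T\<^sub>1 \<dots> T\<^sub>n\<close> reduces
to a normal term with a constant head, so applying it to the normal form of any
\<open>s \<in> B\<^sup>\<dagger> \<subseteq> [[B]]\<close> yields a normal, well-typed spine, which lies in \<open>C\<^sup>\<dagger>\<close> by (1) for \<open>C\<close>.
For (2) at \<open>B \<rightarrow> C\<close>, the constant \<open>c\<^sup>B\<close> lies in \<open>[[B]]\<close>, hence in \<open>B\<^sup>\<dagger>\<close> by (1), so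
\<open>u c\<^sup>B \<in> C\<^sup>\<dagger> \<subseteq> [[C]]\<close> has a typed normal form. A reduction of \<open>u c\<^sup>B\<close> either stays
inside \<open>u\<close>, or passes through \<open>\<lambda>x. b\<close> with \<open>b[x:=c\<^sup>B]\<close> normalizing; substituting a
constant for a variable reflects reduction, normality and typing, so in both cases \<open>u\<close>
has a normal form of type \<open>B \<rightarrow> C\<close>. The \<open>\<forall>\<close>-case is the same with a fresh atom \<open>Y\<close> in
place of \<open>c\<^sup>B\<close>: renaming \<open>Y\<close> back to the bound atom reflects reduction and typing,
and freshness of \<open>Y\<close> makes \<open>A[X:=Y]\<close> determine \<open>A\<close>.\<close>

section \<open>Renaming atoms\<close>

definition ren_up :: "(nat \<Rightarrow> nat) \<Rightarrow> nat \<Rightarrow> nat" where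
  "ren_up f n = (case n of 0 \<Rightarrow> 0 | Suc m \<Rightarrow> Suc (f m))"

fun ren_fm :: "(nat \<Rightarrow> nat) \<Rightarrow> fm \<Rightarrow> fm" where
  "ren_fm f (Atom n) = Atom (f n)"
| "ren_fm f (Imp A B) = Imp (ren_fm f A) (ren_fm f B)"
| "ren_fm f (All A) = All (ren_fm (ren_up f) A)"

fun ren_tm :: "(nat \<Rightarrow> nat) \<Rightarrow> tm \<Rightarrow> tm" where
  "ren_tm f (Var i) = Var i"
| "ren_tm f (Con A) = Con (ren_fm f A)"
| "ren_tm f (Lam t) = Lam (ren_tm f t)"
| "ren_tm f (App t s) = App (ren_tm f t) (ren_tm f s)"
| "ren_tm f (TLam t) = TLam (ren_tm (ren_up f) t)"
| "ren_tm f (TApp t n) = TApp (ren_tm f t) (f n)"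

definition shift_atom :: "nat \<Rightarrow> nat \<Rightarrow> nat" where
  "shift_atom k n = (if n < k then n else Suc n)"

definition inst_atom :: "nat \<Rightarrow> nat \<Rightarrow> nat \<Rightarrow> nat" where
  "inst_atom k Y n = (if n < k then n else if n = k then Y + k else n - 1)"

lemma ren_up_comp: "ren_up f \<circ> ren_up g = ren_up (f \<circ> g)"
  by (rule ext) (simp add: ren_up_def split: nat.split)

lemma ren_up_id: "ren_up (\<lambda>n. n) = (\<lambda>n. n)"
  by (rule ext) (simp add: ren_up_def split: nat.split)

lemma ren_up_shift_atom: "ren_up (shift_atom k) = shift_atom (Suc k)"
  by (rule ext) (simp add: ren_up_def shift_atom_def split: nat.split)

lemma ren_up_inst_atom: "ren_up (inst_atom k Y) = inst_atom (Suc k) Y"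
  by (rule ext) (auto simp add: ren_up_def inst_atom_def split: nat.split)

lemma ren_up_comp_shift_atom: "ren_up f \<circ> shift_atom 0 = shift_atom 0 \<circ> f"
  by (rule ext) (simp add: ren_up_def shift_atom_def)

lemma inst_atom_comp_ren_up: "inst_atom 0 (f Y) \<circ> ren_up f = f \<circ> inst_atom 0 Y"
  by (rule ext) (simp add: inst_atom_def ren_up_def split: nat.split)

lemma inst_atom_comp_shift_atom: "inst_atom 0 Y \<circ> shift_atom 0 = (\<lambda>n. n)"
  by (rule ext) (simp add: inst_atom_def shift_atom_def)

lemma ren_fm_ren_fm: "ren_fm f (ren_fm g A) = ren_fm (f \<circ> g) A"
  by (induction A arbitrary: f g) (simp_all flip: ren_up_comp)

lemma ren_tm_ren_tm: "ren_tm f (ren_tm g t) = ren_tm (f \<circ> g) t"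
  by (induction t arbitrary: f g) (simp_all add: ren_fm_ren_fm flip: ren_up_comp)

lemma ren_fm_comp: "ren_fm f \<circ> ren_fm g = ren_fm (f \<circ> g)"
  by (rule ext) (simp add: ren_fm_ren_fm)

lemma ren_fm_id: "ren_fm (\<lambda>n. n) A = A"
  by (induction A) (simp_all add: ren_up_id)

lemma ren_tm_id: "ren_tm (\<lambda>n. n) t = t"
  by (induction t) (simp_all add: ren_up_id ren_fm_id)

lemma fshift_eq_ren_fm: "fshift k A = ren_fm (shift_atom k) A"
  by (induction A arbitrary: k) (simp_all add: shift_atom_def ren_up_shift_atom)

lemma fsubst_eq_ren_fm: "fsubst k Y A = ren_fm (inst_atom k Y) A"
  by (induction A arbitrary: k) (simp_all add: inst_atom_def ren_up_inst_atom)

lemma ashift_eq_ren_tm: "ashift k t = ren_tm (shift_atom k) t"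
  by (induction t arbitrary: k) (simp_all add: shift_atom_def ren_up_shift_atom fshift_eq_ren_fm)

lemma asubst_eq_ren_tm: "asubst k Y t = ren_tm (inst_atom k Y) t"
  by (induction t arbitrary: k) (simp_all add: inst_atom_def ren_up_inst_atom fsubst_eq_ren_fm)

lemma asubst_ashift [simp]: "asubst 0 Y (ashift 0 u) = u"
  by (simp add: asubst_eq_ren_tm ashift_eq_ren_tm ren_tm_ren_tm inst_atom_comp_shift_atom ren_tm_id)

section \<open>Atoms occurring in formulas and terms\<close>

fun fm_atoms_lt :: "nat \<Rightarrow> fm \<Rightarrow> bool" where
  "fm_atoms_lt N (Atom n) = (n < N)"
| "fm_atoms_lt N (Imp A B) = (fm_atoms_lt N A \<and> fm_atoms_lt N B)"
| "fm_atoms_lt N (All A) = fm_atoms_lt (Suc N) A"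

fun tm_atoms_lt :: "nat \<Rightarrow> tm \<Rightarrow> bool" where
  "tm_atoms_lt N (Var i) = True"
| "tm_atoms_lt N (Con A) = fm_atoms_lt N A"
| "tm_atoms_lt N (Lam t) = tm_atoms_lt N t"
| "tm_atoms_lt N (App t s) = (tm_atoms_lt N t \<and> tm_atoms_lt N s)"
| "tm_atoms_lt N (TLam t) = tm_atoms_lt (Suc N) t"
| "tm_atoms_lt N (TApp t n) = (tm_atoms_lt N t \<and> n < N)"

lemma ren_up_cong: "(\<forall>n<N. f n = g n) \<Longrightarrow> \<forall>n<Suc N. ren_up f n = ren_up g n"
  by (auto simp: ren_up_def split: nat.split)

lemma ren_fm_cong: "fm_atoms_lt N A \<Longrightarrow> \<forall>n<N. f n = g n \<Longrightarrow> ren_fm f A = ren_fm g A"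
  by (induction A arbitrary: N f g) (auto dest: ren_up_cong)

lemma ren_tm_cong: "tm_atoms_lt N t \<Longrightarrow> \<forall>n<N. f n = g n \<Longrightarrow> ren_tm f t = ren_tm g t"
  by (induction t arbitrary: N f g) (auto dest: ren_up_cong intro: ren_fm_cong)

lemma ren_up_less: "\<forall>n<N. f n < M \<Longrightarrow> \<forall>n<Suc N. ren_up f n < Suc M"
  by (auto simp: ren_up_def split: nat.split)

lemma fm_atoms_lt_ren_fm: "fm_atoms_lt N A \<Longrightarrow> \<forall>n<N. f n < M \<Longrightarrow> fm_atoms_lt M (ren_fm f A)"
  by (induction A arbitrary: N M f) (auto dest: ren_up_less)

lemma tm_atoms_lt_ren_tm: "tm_atoms_lt N t \<Longrightarrow> \<forall>n<N. f n < M \<Longrightarrow> tm_atoms_lt M (ren_tm f t)"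
  by (induction t arbitrary: N M f) (auto dest: ren_up_less intro: fm_atoms_lt_ren_fm)

lemma fm_atoms_lt_mono: "fm_atoms_lt N A \<Longrightarrow> N \<le> M \<Longrightarrow> fm_atoms_lt M A"
  by (induction A arbitrary: N M) force+

lemma tm_atoms_lt_mono: "tm_atoms_lt N t \<Longrightarrow> N \<le> M \<Longrightarrow> tm_atoms_lt M t"
  by (induction t arbitrary: N M) (force intro: fm_atoms_lt_mono)+

lemma ex_fm_atoms_lt: "\<exists>N. fm_atoms_lt N A"
proof (induction A)
  case (Atom n)
  show ?case by (rule exI[of _ "Suc n"]) simp
next
  case (Imp A B)
  then obtain N M where "fm_atoms_lt N A" "fm_atoms_lt M B" by blast
  then show ?case by (intro exI[of _ "max N M"]) (auto intro: fm_atoms_lt_mono)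
next
  case (All A)
  then obtain N where "fm_atoms_lt N A" by blast
  then show ?case by (intro exI[of _ N]) (auto intro: fm_atoms_lt_mono)
qed

lemma ex_tm_atoms_lt: "\<exists>N. tm_atoms_lt N t"
proof (induction t)
  case (App t s)
  then obtain N M where "tm_atoms_lt N t" "tm_atoms_lt M s" by blast
  then show ?case by (intro exI[of _ "max N M"]) (auto intro: tm_atoms_lt_mono)
next
  case (TLam t)
  then obtain N where "tm_atoms_lt N t" by blast
  then show ?case by (intro exI[of _ N]) (auto intro: tm_atoms_lt_mono)
next
  case (TApp t n)
  then obtain N where "tm_atoms_lt N t" by blast
  then show ?case by (intro exI[of _ "max N (Suc n)"]) (auto intro: tm_atoms_lt_mono)
qed (auto simp: ex_fm_atoms_lt)

definition unshift_atom :: "nat \<Rightarrow> nat \<Rightarrow> nat" where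
  "unshift_atom Y n = (if n = Y then 0 else Suc n)"

lemma ren_fm_unshift_atom_fsubst:
  assumes "fm_atoms_lt (Suc Y) A"
  shows "ren_fm (unshift_atom Y) (fsubst 0 Y A) = A"
proof -
  have "ren_fm (unshift_atom Y \<circ> inst_atom 0 Y) A = ren_fm (\<lambda>n. n) A"
    using assms by (rule ren_fm_cong) (auto simp: unshift_atom_def inst_atom_def)
  then show ?thesis by (simp add: fsubst_eq_ren_fm ren_fm_ren_fm ren_fm_id)
qed

lemma ren_tm_unshift_atom_asubst:
  assumes "tm_atoms_lt (Suc Y) t"
  shows "ren_tm (unshift_atom Y) (asubst 0 Y t) = t"
proof -
  have "ren_tm (unshift_atom Y \<circ> inst_atom 0 Y) t = ren_tm (\<lambda>n. n) t"
    using assms by (rule ren_tm_cong) (auto simp: unshift_atom_def inst_atom_def)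
  then show ?thesis by (simp add: asubst_eq_ren_tm ren_tm_ren_tm ren_tm_id)
qed

lemma fsubst_fresh_inj:
  "fm_atoms_lt (Suc Y) A \<Longrightarrow> fm_atoms_lt (Suc Y) A' \<Longrightarrow> fsubst 0 Y A = fsubst 0 Y A' \<Longrightarrow> A = A'"
  by (metis ren_fm_unshift_atom_fsubst)

section \<open>Substituting terms\<close>

lemma subst_lift [simp]: "subst k s (lift k u) = u"
  by (induction u arbitrary: k s) auto

lemma ren_tm_lift: "ren_tm f (lift k s) = lift k (ren_tm f s)"
  by (induction s arbitrary: k f) auto

lemma ren_tm_subst: "ren_tm f (subst k s t) = subst k (ren_tm f s) (ren_tm f t)"
proof (induction t arbitrary: k s f)
  case (TLam t)
  have "ren_tm (ren_up f) (ashift 0 s) = ashift 0 (ren_tm f s)"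
    by (simp add: ashift_eq_ren_tm ren_tm_ren_tm ren_up_comp_shift_atom)
  with TLam show ?case by simp
qed (simp_all add: ren_tm_lift)

lemma ashift_subst: "ashift 0 (subst k s t) = subst k (ashift 0 s) (ashift 0 t)"
  by (simp add: ashift_eq_ren_tm ren_tm_subst)

lemma asubst_subst_Con_fshift:
  "asubst 0 Y (subst k (Con (fshift 0 E)) t) = subst k (Con E) (asubst 0 Y t)"
proof -
  have "ren_tm (inst_atom 0 Y) (Con (fshift 0 E)) = Con E"
    by (simp add: fshift_eq_ren_fm ren_fm_ren_fm inst_atom_comp_shift_atom ren_fm_id)
  then show ?thesis by (simp add: asubst_eq_ren_tm ren_tm_subst del: ren_tm.simps)
qed

lemma lift_subst_Con: "j \<le> k \<Longrightarrow> lift j (subst k (Con E) u) = subst (Suc k) (Con E) (lift j u)"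
  by (induction u arbitrary: j k E) auto

lemma subst_subst_Con:
  "j \<le> k \<Longrightarrow> subst k (Con E) (subst j u t) = subst j (subst k (Con E) u) (subst (Suc k) (Con E) t)"
  by (induction t arbitrary: j k u E) (auto simp: lift_subst_Con ashift_subst)

section \<open>Typing\<close>

inductive_cases typing_VarE: "typing \<Gamma> (Var i) A"
inductive_cases typing_ConE: "typing \<Gamma> (Con B) A"
inductive_cases typing_LamE: "typing \<Gamma> (Lam t) A"
inductive_cases typing_AppE: "typing \<Gamma> (App t s) A"
inductive_cases typing_TLamE: "typing \<Gamma> (TLam t) A"
inductive_cases typing_TAppE: "typing \<Gamma> (TApp t Y) A"

lemma typing_ren_tm: "typing \<Gamma> t A \<Longrightarrow> typing (map (ren_fm f) \<Gamma>) (ren_tm f t) (ren_fm f A)"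
proof (induction arbitrary: f rule: typing.induct)
  case (T_Var i \<Gamma>)
  then show ?case using typing.T_Var[of i "map (ren_fm f) \<Gamma>"] by simp
next
  case (T_TLam \<Gamma> t A)
  have "typing (map (fshift 0) (map (ren_fm f) \<Gamma>)) (ren_tm (ren_up f) t) (ren_fm (ren_up f) A)"
    using T_TLam.IH[of "ren_up f"]
    by (simp add: fshift_eq_ren_fm[abs_def] ren_fm_comp ren_up_comp_shift_atom)
  then show ?case by (simp add: typing.T_TLam)
next
  case (T_TApp \<Gamma> t A Y)
  have "typing (map (ren_fm f) \<Gamma>) (TApp (ren_tm f t) (f Y)) (fsubst 0 (f Y) (ren_fm (ren_up f) A))"
    using T_TApp.IH by (auto intro: typing.T_TApp)
  then show ?case by (simp add: fsubst_eq_ren_fm ren_fm_ren_fm inst_atom_comp_ren_up)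
qed (auto intro: typing.intros)

lemma typing_subst_Con_inv:
  "typing \<Gamma> (subst k (Con E) b) C \<Longrightarrow> k \<le> length \<Gamma> \<Longrightarrow> typing (take k \<Gamma> @ E # drop k \<Gamma>) b C"
proof (induction b arbitrary: \<Gamma> k E C)
  case (Var i)
  let ?\<Gamma>' = "take k \<Gamma> @ E # drop k \<Gamma>"
  consider "i < k" | "i = k" | "k < i" by linarith
  then show ?case
  proof cases
    case 1
    with Var have "i < length \<Gamma>" "C = \<Gamma> ! i" by (auto elim: typing_VarE)
    with 1 show ?thesis using typing.T_Var[of i ?\<Gamma>'] by (simp add: nth_append)
  next
    case 2
    with Var have "C = E" by (auto elim: typing_ConE)
    with 2 Var.prems(2) show ?thesis using typing.T_Var[of k ?\<Gamma>'] by (simp add: nth_append)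
  next
    case 3
    with Var have "i - 1 < length \<Gamma>" "C = \<Gamma> ! (i - 1)" by (auto elim: typing_VarE)
    with 3 Var.prems(2) show ?thesis using typing.T_Var[of i ?\<Gamma>'] by (simp add: nth_append)
  qed
next
  case (Lam t)
  then show ?case by (fastforce elim!: typing_LamE intro: typing.T_Lam)
next
  case (App t s)
  from App.prems(1) obtain B where
    "typing \<Gamma> (subst k (Con E) t) (Imp B C)" "typing \<Gamma> (subst k (Con E) s) B"
    by (auto elim: typing_AppE)
  with App.IH App.prems(2) show ?case by (blast intro: typing.T_App)
next
  case (TLam t)
  then show ?case by (fastforce elim!: typing_TLamE intro: typing.T_TLam simp: take_map drop_map)
qed (auto elim!: typing_ConE typing_TAppE intro: typing.intros)

fun con_headed :: "tm \<Rightarrow> bool" where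
  "con_headed (Con A) = True"
| "con_headed (App t s) = con_headed t"
| "con_headed (TApp t Y) = con_headed t"
| "con_headed _ = False"

lemma con_headed_apps: "con_headed t \<Longrightarrow> con_headed (apps t Ts)"
  by (induction t Ts rule: apps.induct) auto

lemma normal_App_con_headed: "con_headed t \<Longrightarrow> normal t \<Longrightarrow> normal s \<Longrightarrow> normal (App t s)"
  by (cases t) auto

lemma normal_TApp_con_headed: "con_headed t \<Longrightarrow> normal t \<Longrightarrow> normal (TApp t Y)"
  by (cases t) auto

lemma closed_normal_typed_cases:
  "typing [] t T \<Longrightarrow> normal t \<Longrightarrow> con_headed t \<or> is_lam t \<or> is_tlam t"
proof (induction "[] :: fm list" t T rule: typing.induct)
  case (T_App t B C s)
  moreover have "\<not> is_tlam t" using T_App.hyps(1) by (cases t) (auto elim: typing_TLamE)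
  ultimately show ?case by auto
next
  case (T_TApp t A Y)
  moreover have "\<not> is_lam t" using T_TApp.hyps(1) by (cases t) (auto elim: typing_LamE)
  ultimately show ?case by auto
qed auto

text \<open>The type of \<open>c\<^sup>D T\<^sub>1 \<dots> T\<^sub>n\<close> is built from \<open>D\<close> and the atoms among the \<open>T\<^sub>i\<close>.\<close>
lemma fm_atoms_lt_type_con_headed:
  "con_headed t \<Longrightarrow> typing \<Gamma> t T \<Longrightarrow> tm_atoms_lt N t \<Longrightarrow> fm_atoms_lt N T"
proof (induction t arbitrary: T)
  case (App t s)
  then show ?case by (fastforce elim: typing_AppE)
next
  case (TApp t Y)
  then obtain A where A: "typing \<Gamma> t (All A)" "T = fsubst 0 Y A" by (auto elim: typing_TAppE)
  with TApp have "fm_atoms_lt (Suc N) A" by fastforce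
  with TApp.prems(3) show ?case
    unfolding A(2) fsubst_eq_ren_fm by (auto intro!: fm_atoms_lt_ren_fm simp: inst_atom_def)
qed (auto elim: typing_ConE)

section \<open>Reduction\<close>

lemma rtranclp_map:
  assumes "\<And>x y. R x y \<Longrightarrow> S (f x) (f y)" and "R\<^sup>*\<^sup>* x y"
  shows "S\<^sup>*\<^sup>* (f x) (f y)"
  using assms(2) by induction (auto intro: assms(1) rtranclp.rtrancl_into_rtrancl)

lemma rtranclp_reflect:
  assumes "\<And>x z. R (f x) z \<Longrightarrow> \<exists>y. R x y \<and> z = f y" and "R\<^sup>*\<^sup>* (f x) z"
  shows "\<exists>y. R\<^sup>*\<^sup>* x y \<and> z = f y"
  using assms(2)
proof (induction rule: rtranclp_induct)
  case (step z z')
  then show ?case by (metis assms(1) rtranclp.rtrancl_into_rtrancl)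
qed blast

lemma beta_star_Lam: "beta_star t t' \<Longrightarrow> beta_star (Lam t) (Lam t')"
  by (rule rtranclp_map) (rule B_Lam)

lemma beta_star_TLam: "beta_star t t' \<Longrightarrow> beta_star (TLam t) (TLam t')"
  by (rule rtranclp_map) (rule B_TLam)

lemma beta_star_AppL: "beta_star t t' \<Longrightarrow> beta_star (App t s) (App t' s)"
  by (rule rtranclp_map[where f = "\<lambda>t. App t s"]) (rule B_AppL)

lemma beta_star_AppR: "beta_star s s' \<Longrightarrow> beta_star (App t s) (App t s')"
  by (rule rtranclp_map) (rule B_AppR)

lemma beta_star_App: "beta_star t t' \<Longrightarrow> beta_star s s' \<Longrightarrow> beta_star (App t s) (App t' s')"
  by (meson beta_star_AppL beta_star_AppR rtranclp_trans)

lemma beta_star_TApp: "beta_star t t' \<Longrightarrow> beta_star (TApp t Y) (TApp t' Y)"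
  by (rule rtranclp_map[where f = "\<lambda>t. TApp t Y"]) (rule B_TApp)

inductive_cases beta_VarE: "beta (Var i) r"
inductive_cases beta_ConE: "beta (Con A) r"
inductive_cases beta_LamE: "beta (Lam t) r"
inductive_cases beta_AppE: "beta (App t s) r"
inductive_cases beta_TLamE: "beta (TLam t) r"
inductive_cases beta_TAppE: "beta (TApp t Y) r"

lemma beta_App_cases:
  assumes "beta (App t s) r"
  obtains (redex) b where "t = Lam b" "r = subst 0 s b"
  | (AppL) t' where "beta t t'" "r = App t' s"
  | (AppR) s' where "beta s s'" "r = App t s'"
  using assms by (auto elim: beta_AppE)

lemma beta_TApp_cases:
  assumes "beta (TApp t Y) r"
  obtains (redex) b where "t = TLam b" "r = asubst 0 Y b"
  | (TApp) t' where "beta t t'" "r = TApp t' Y"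
  using assms by (auto elim: beta_TAppE)

lemma beta_ren_tm_inv: "beta (ren_tm f b) r \<Longrightarrow> \<exists>b'. beta b b' \<and> r = ren_tm f b'"
proof (induction b arbitrary: f r)
  case (App t s)
  from App.prems[simplified] show ?case
  proof (cases rule: beta_App_cases)
    case (redex t1)
    then obtain t0 where "t = Lam t0" "t1 = ren_tm f t0" by (cases t) auto
    with redex show ?thesis by (auto simp: ren_tm_subst intro!: beta.intros)
  qed (use App.IH in \<open>fastforce intro: beta.intros\<close>)+
next
  case (TApp t n)
  from TApp.prems[simplified] show ?case
  proof (cases rule: beta_TApp_cases)
    case (redex t1)
    then obtain t0 where t0: "t = TLam t0" "t1 = ren_tm (ren_up f) t0" by (cases t) auto
    have "asubst 0 (f n) (ren_tm (ren_up f) t0) = ren_tm f (asubst 0 n t0)"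
      by (simp add: asubst_eq_ren_tm ren_tm_ren_tm inst_atom_comp_ren_up)
    with redex t0 show ?thesis by (auto intro!: beta.intros)
  qed (use TApp.IH in \<open>fastforce intro: beta.intros\<close>)
qed (fastforce elim: beta_VarE beta_ConE beta_LamE beta_TLamE intro: beta.intros)+

lemma beta_subst_Con_inv: "beta (subst k (Con E) b) r \<Longrightarrow> \<exists>b'. beta b b' \<and> r = subst k (Con E) b'"
proof (induction b arbitrary: k E r)
  case (Var i)
  then show ?case by (auto elim: beta_VarE beta_ConE split: if_splits)
next
  case (App t s)
  from App.prems[simplified] show ?case
  proof (cases rule: beta_App_cases)
    case (redex t1)
    then obtain t0 where "t = Lam t0" "t1 = subst (Suc k) (Con E) t0"
      by (cases t) (auto split: if_splits)
    with redex show ?thesis by (auto simp: subst_subst_Con intro!: beta.intros)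
  qed (use App.IH in \<open>fastforce intro: beta.intros\<close>)+
next
  case (TApp t n)
  from TApp.prems[simplified] show ?case
  proof (cases rule: beta_TApp_cases)
    case (redex t1)
    then obtain t0 where "t = TLam t0" "t1 = subst k (Con (fshift 0 E)) t0"
      by (cases t) (auto split: if_splits)
    with redex show ?thesis by (auto simp: asubst_subst_Con_fshift intro!: beta.intros)
  qed (use TApp.IH in \<open>fastforce intro: beta.intros\<close>)
qed (fastforce elim: beta_ConE beta_LamE beta_TLamE intro: beta.intros)+

lemma beta_star_ren_tm_inv: "beta_star (ren_tm f b) m \<Longrightarrow> \<exists>b'. beta_star b b' \<and> m = ren_tm f b'"
  by (rule rtranclp_reflect) (rule beta_ren_tm_inv)

lemma beta_star_subst_Con_inv:
  "beta_star (subst k (Con E) b) m \<Longrightarrow> \<exists>b'. beta_star b b' \<and> m = subst k (Con E) b'"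
  by (rule rtranclp_reflect) (rule beta_subst_Con_inv)

lemma normal_ren_tmD: "normal (ren_tm f b) \<Longrightarrow> normal b"
proof (induction b arbitrary: f)
  case (App t s) then show ?case by (cases t) auto
next
  case (TApp t n) then show ?case by (cases t) auto
qed auto

lemma normal_subst_ConD: "normal (subst k (Con E) b) \<Longrightarrow> normal b"
proof (induction b arbitrary: k E)
  case (App t s) then show ?case by (cases t) auto
next
  case (TApp t n) then show ?case by (cases t) auto
qed auto

lemma con_headed_beta_star: "beta_star t t' \<Longrightarrow> con_headed t \<Longrightarrow> con_headed t'"
proof (induction rule: rtranclp_induct)
  case (step y z)
  have "beta y z \<Longrightarrow> con_headed y \<Longrightarrow> con_headed z" for y z
    by (induction rule: beta.induct) auto
  with step show ?case by blast
qed

lemma tm_atoms_lt_lift: "tm_atoms_lt N (lift k s) = tm_atoms_lt N s"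
  by (induction s arbitrary: k N) auto

lemma tm_atoms_lt_subst: "tm_atoms_lt N t \<Longrightarrow> tm_atoms_lt N s \<Longrightarrow> tm_atoms_lt N (subst k s t)"
proof (induction t arbitrary: k s N)
  case (Lam t)
  then show ?case by (simp add: tm_atoms_lt_lift)
next
  case (TLam t)
  have "tm_atoms_lt (Suc N) (ashift 0 s)"
    unfolding ashift_eq_ren_tm using TLam.prems(2) by (rule tm_atoms_lt_ren_tm) (simp add: shift_atom_def)
  with TLam show ?case by simp
qed auto

lemma tm_atoms_lt_beta_star: "beta_star t t' \<Longrightarrow> tm_atoms_lt N t \<Longrightarrow> tm_atoms_lt N t'"
proof (induction rule: rtranclp_induct)
  case (step y z)
  have "beta y z \<Longrightarrow> tm_atoms_lt N y \<Longrightarrow> tm_atoms_lt N z" for y z N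
  proof (induction arbitrary: N rule: beta.induct)
    case (B_tbeta t Y)
    then show ?case
      unfolding asubst_eq_ren_tm by (auto intro!: tm_atoms_lt_ren_tm simp: inst_atom_def)
  qed (auto simp: tm_atoms_lt_subst)
  with step show ?case by blast
qed

lemma beta_star_App_Con_cases:
  assumes "beta_star (App u (Con B)) m"
  obtains (inside) u' where "beta_star u u'" "m = App u' (Con B)"
  | (redex) b where "beta_star u (Lam b)" "beta_star (subst 0 (Con B) b) m"
proof -
  have "(\<exists>u'. beta_star u u' \<and> m = App u' (Con B))
      \<or> (\<exists>b. beta_star u (Lam b) \<and> beta_star (subst 0 (Con B) b) m)"
    using assms
  proof (induction rule: rtranclp_induct)
    case (step y z)
    then show ?case
      by (auto elim!: beta_App_cases beta_ConE intro: rtranclp.rtrancl_into_rtrancl)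
  qed blast
  with that show ?thesis by blast
qed

lemma beta_star_TApp_cases:
  assumes "beta_star (TApp u Y) m"
  obtains (inside) u' where "beta_star u u'" "m = TApp u' Y"
  | (redex) b where "beta_star u (TLam b)" "beta_star (asubst 0 Y b) m"
proof -
  have "(\<exists>u'. beta_star u u' \<and> m = TApp u' Y)
      \<or> (\<exists>b. beta_star u (TLam b) \<and> beta_star (asubst 0 Y b) m)"
    using assms
  proof (induction rule: rtranclp_induct)
    case (step y z)
    then show ?case
      by (auto elim!: beta_TApp_cases intro: rtranclp.rtrancl_into_rtrancl)
  qed blast
  with that show ?thesis by blast
qed


lemma typed_normal_form_from_App_Con:
  assumes "beta_star (App u (Con B)) m" "normal m" "typing [] m C"
  obtains u' where "beta_star u u'" "normal u'" "typing [] u' (Imp B C)"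
  using assms(1)
proof (cases rule: beta_star_App_Con_cases)
  case (inside u')
  with assms(2,3) have "normal u'" "typing [] u' (Imp B C)"
    by (auto elim!: typing_AppE typing_ConE)
  with inside(1) that show ?thesis by blast
next
  case (redex b)
  from beta_star_subst_Con_inv[OF redex(2)] obtain b' where
    b': "beta_star b b'" "m = subst 0 (Con B) b'" by blast
  with assms(2,3) have "normal (Lam b')" "typing [] (Lam b') (Imp B C)"
    using typing_subst_Con_inv[of "[]" 0 B b' C] by (auto dest: normal_subst_ConD intro: T_Lam)
  moreover have "beta_star u (Lam b')"
    using redex(1) beta_star_Lam[OF b'(1)] by (rule rtranclp_trans)
  ultimately show ?thesis using that by blast
qed

lemma typed_normal_form_from_TApp_fresh:
  assumes "beta_star (TApp u Y) m" "normal m" "typing [] m (fsubst 0 Y A)"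
    and fresh_u: "tm_atoms_lt Y u" and fresh_A: "fm_atoms_lt (Suc Y) A"
  obtains u' where "beta_star u u'" "normal u'" "typing [] u' (All A)"
  using assms(1)
proof (cases rule: beta_star_TApp_cases)
  case (inside u')
  with assms(3) obtain A' where A': "typing [] u' (All A')" "fsubst 0 Y A' = fsubst 0 Y A"
    by (auto elim: typing_TAppE)
  from inside assms(2) have "normal u'" "\<not> is_tlam u'" by auto
  moreover have "\<not> is_lam u'" using A'(1) by (cases u') (auto elim: typing_LamE)
  ultimately have "con_headed u'" using closed_normal_typed_cases[OF A'(1)] by blast
  moreover have "tm_atoms_lt Y u'" using tm_atoms_lt_beta_star[OF inside(1) fresh_u] .
  ultimately have "fm_atoms_lt (Suc Y) A'"
    using fm_atoms_lt_type_con_headed[OF _ A'(1)] by fastforce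
  then have "A' = A" using fsubst_fresh_inj[OF _ fresh_A A'(2)] by blast
  with A'(1) inside(1) \<open>normal u'\<close> that show ?thesis by blast
next
  case (redex b)
  from beta_star_ren_tm_inv[of "inst_atom 0 Y" b m] redex(2) obtain b' where
    b': "beta_star b b'" "m = asubst 0 Y b'" by (auto simp: asubst_eq_ren_tm)
  with assms(2) have "normal b'" by (auto simp: asubst_eq_ren_tm dest: normal_ren_tmD)
  have "tm_atoms_lt Y (TLam b)" using tm_atoms_lt_beta_star[OF redex(1) fresh_u] .
  then have "tm_atoms_lt (Suc Y) b'" using tm_atoms_lt_beta_star[OF b'(1)] by simp
  then have "typing [] b' A"
    using typing_ren_tm[OF assms(3), of "unshift_atom Y"] b'(2)
    by (simp add: ren_tm_unshift_atom_asubst ren_fm_unshift_atom_fsubst fresh_A)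
  then have "typing [] (TLam b') (All A)" by (simp add: T_TLam)
  moreover have "beta_star u (TLam b')"
    using redex(1) beta_star_TLam[OF b'(1)] by (rule rtranclp_trans)
  ultimately show ?thesis using that \<open>normal b'\<close> by simp
qed

section \<open>The I-phase model\<close>

lemma dag_closed: "t \<in> dag A \<Longrightarrow> closed t"
  by (cases A) (auto simp: den_def)

lemma Con_in_den: "Con A \<in> den A"
  by (auto simp: den_def closed_def intro: T_Con)

lemma apps_append: "apps t (Ts @ Us) = apps (apps t Ts) Us"
  by (induction t Ts rule: apps.induct) auto

lemma den_con_headed_normal_form:
  assumes "t \<in> den A" "con_headed t"
  obtains n where "beta_star t n" "normal n" "con_headed n" "typing [] n A"
  using assms con_headed_beta_star by (auto simp: den_def)

definition con_spines_in_dag :: "fm \<Rightarrow> bool" where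
  "con_spines_in_dag A \<longleftrightarrow> (\<forall>D Ts. (\<forall>T \<in> set Ts. arg_ok T) \<longrightarrow>
     apps (Con D) Ts \<in> den A \<longrightarrow> apps (Con D) Ts \<in> dag A)"

lemma con_spines_in_dagD:
  "con_spines_in_dag A \<Longrightarrow> \<forall>T \<in> set Ts. arg_ok T \<Longrightarrow> apps (Con D) Ts \<in> den A \<Longrightarrow>
    apps (Con D) Ts \<in> dag A"
  unfolding con_spines_in_dag_def by blast

lemma con_spines_in_dag_Imp:
  assumes den_B: "dag B \<subseteq> den B" and spines_C: "con_spines_in_dag C"
  shows "con_spines_in_dag (Imp B C)"
  unfolding con_spines_in_dag_def
proof (intro allI impI)
  fix D Ts
  assume ok: "\<forall>T \<in> set Ts. arg_ok T" and t: "apps (Con D) Ts \<in> den (Imp B C)"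
  let ?t = "apps (Con D) Ts"
  obtain n where n: "beta_star ?t n" "normal n" "con_headed n" "typing [] n (Imp B C)"
    using t by (rule den_con_headed_normal_form) (simp add: con_headed_apps)
  have "App ?t s \<in> dag C" if s: "s \<in> dag B" for s
  proof -
    from s den_B obtain m where m: "beta_star s m" "normal m" "typing [] m B"
      by (auto simp: den_def)
    have "closed (App ?t s)" using t dag_closed[OF s] by (simp add: den_def closed_def)
    then have "App ?t s \<in> den C" unfolding den_def
      using beta_star_App[OF n(1) m(1)] normal_App_con_headed[OF n(3,2) m(2)] T_App[OF n(4) m(3)]
      by blast
    moreover have "\<forall>T \<in> set (Ts @ [Inl s]). arg_ok T" using ok dag_closed[OF s] by auto
    ultimately show ?thesis
      using con_spines_in_dagD[OF spines_C, of "Ts @ [Inl s]" D] by (simp add: apps_append)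
  qed
  with t show "?t \<in> dag (Imp B C)" by (auto simp: den_def intro!: exI[where x = ?t])
qed

lemma con_spines_in_dag_All:
  assumes spines: "\<And>Y. con_spines_in_dag (fsubst 0 Y A)"
  shows "con_spines_in_dag (All A)"
  unfolding con_spines_in_dag_def
proof (intro allI impI)
  fix D Ts
  assume ok: "\<forall>T \<in> set Ts. arg_ok T" and t: "apps (Con D) Ts \<in> den (All A)"
  let ?t = "apps (Con D) Ts"
  obtain n where n: "beta_star ?t n" "normal n" "con_headed n" "typing [] n (All A)"
    using t by (rule den_con_headed_normal_form) (simp add: con_headed_apps)
  have "TApp ?t Y \<in> dag (fsubst 0 Y A)" for Y
  proof -
    have "closed (TApp ?t Y)" using t by (simp add: den_def closed_def)
    then have "TApp ?t Y \<in> den (fsubst 0 Y A)" unfolding den_def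
      using beta_star_TApp[OF n(1)] normal_TApp_con_headed[OF n(3,2)] T_TApp[OF n(4)]
      by blast
    moreover have "\<forall>T \<in> set (Ts @ [Inr Y]). arg_ok T" using ok by auto
    ultimately show ?thesis
      using con_spines_in_dagD[OF spines, of "Ts @ [Inr Y]" D] by (simp add: apps_append)
  qed
  with t show "?t \<in> dag (All A)" by (auto simp: den_def intro!: exI[where x = ?t])
qed

lemma dag_Imp_subset_den:
  assumes spines_B: "con_spines_in_dag B" and den_C: "dag C \<subseteq> den C"
  shows "dag (Imp B C) \<subseteq> den (Imp B C)"
proof
  fix t
  assume "t \<in> dag (Imp B C)"
  then obtain u where t: "closed t" "beta_star t u" and u: "\<forall>s \<in> dag B. App u s \<in> dag C"
    by auto
  have "Con B \<in> dag B"
    using con_spines_in_dagD[OF spines_B, of "[]" B] Con_in_den by simp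
  with u den_C obtain m where "beta_star (App u (Con B)) m" "normal m" "typing [] m C"
    by (auto simp: den_def)
  then obtain u' where "beta_star u u'" "normal u'" "typing [] u' (Imp B C)"
    by (rule typed_normal_form_from_App_Con)
  with t show "t \<in> den (Imp B C)" by (auto simp: den_def intro: rtranclp_trans)
qed

lemma dag_All_subset_den:
  assumes den: "\<And>Y. dag (fsubst 0 Y A) \<subseteq> den (fsubst 0 Y A)"
  shows "dag (All A) \<subseteq> den (All A)"
proof
  fix t
  assume "t \<in> dag (All A)"
  then obtain u where t: "closed t" "beta_star t u" and u: "\<forall>Y. TApp u Y \<in> dag (fsubst 0 Y A)"
    by auto
  obtain Y where fresh: "tm_atoms_lt Y u" "fm_atoms_lt (Suc Y) A"
  proof -
    obtain N M where "tm_atoms_lt N u" "fm_atoms_lt M A"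
      using ex_tm_atoms_lt ex_fm_atoms_lt by blast
    then show thesis by (intro that[of "max N M"]) (auto elim: tm_atoms_lt_mono fm_atoms_lt_mono)
  qed
  have "TApp u Y \<in> den (fsubst 0 Y A)" using u den by blast
  then obtain m where m: "beta_star (TApp u Y) m" "normal m" "typing [] m (fsubst 0 Y A)"
    by (auto simp: den_def)
  from typed_normal_form_from_TApp_fresh[OF m fresh] obtain u' where
    "beta_star u u'" "normal u'" "typing [] u' (All A)" .
  with t show "t \<in> den (All A)" by (auto simp: den_def intro: rtranclp_trans)
qed

theorem mainTheorem9:
  fixes A :: fm
  shows "(\<forall>D Ts. (\<forall>T \<in> set Ts. arg_ok T) \<longrightarrow>
            apps (Con D) Ts \<in> den A \<longrightarrow> apps (Con D) Ts \<in> dag A)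
         \<and> dag A \<subseteq> den A"
proof -
  have "con_spines_in_dag A \<and> dag A \<subseteq> den A"
  proof (induction "fsize A" arbitrary: A rule: less_induct)
    case less
    show ?case
    proof (cases A)
      case (Atom X)
      then show ?thesis by (simp add: con_spines_in_dag_def)
    next
      case (Imp B C)
      with less have "con_spines_in_dag B \<and> dag B \<subseteq> den B" "con_spines_in_dag C \<and> dag C \<subseteq> den C"
        by auto
      with Imp show ?thesis using con_spines_in_dag_Imp dag_Imp_subset_den by blast
    next
      case (All A')
      with less have "con_spines_in_dag (fsubst 0 Y A') \<and> dag (fsubst 0 Y A') \<subseteq> den (fsubst 0 Y A')"
        for Y by auto
      with All show ?thesis using con_spines_in_dag_All dag_All_subset_den by blast
    qed
  qed
  then show ?thesis unfolding con_spines_in_dag_def .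
qed

end
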